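(* For all $n\ge0$, $$F_{2n}(x,y,q)=\sum_{k=0}^nx^{n-k}y^kq^{\binom{n+k}2-nk}\begin{bmatrix}n\\k\end{bmatrix}_qF_{n-k}(xq^{n+k},yq^{n+k},q).$$
   Context: $\Pi_n(13/2,123)$ is the set of layered matchings of $[n]$: set partitions whose blocks are consecutive intervals $[1,i_1]/\dots/[i_{k-1}+1,n]$, each of size $1$ or $2$. $\Pi_0(13/2,123)$ consists of the empty partition. For $\pi=B_1/\dots/B_k$ with $\min B_1<\dots<\min B_k$, $rb(\pi)$ is the number of pairs $(b,B_j)$ with $b\in B_i$, $j>i$, $\max B_j>b$. Let $s(\pi)$ and $d(\pi)$ be the numbers of blocks of size $1$ and $2$. Define $F_n(x,y,q)=\sum_{\pi\in\Pi_n(13/2,123)}x^{s(\pi)}y^{d(\pi)}q^{rb(\pi)}$. $F_n(xq^a,yq^a,q)$ denotes the substitution $x\mapsto xq^a$, $y\mapsto yq^a$. The $q$-binomial coefficient is $\begin{bmatrix}n\\k\end{bmatrix}_q=\prod_{i=1}^k\frac{q^{n-i+1}-1}{q^i-1}$ for $0\le k\le n$. *)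

theory Defs
  imports Main
begin

fun intervals :: "nat \<Rightarrow> nat list \<Rightarrow> nat set list" where
  "intervals a [] = []"
| "intervals a (c # cs) = {a..<a + c} # intervals (a + c) cs"

text \<open>Layered matchings of [n]: set partitions into consecutive intervals
  [1,i1]/.../[i_(k-1)+1,n], each of size 1 or 2, listed as B_1,...,B_k with
  increasing minima.\<close>
definition layered :: "nat \<Rightarrow> nat set list set" where
  "layered n = intervals 1 ` {cs. set cs \<subseteq> {1, 2} \<and> sum_list cs = n}"

definition rb :: "nat set list \<Rightarrow> nat" where
  "rb Bs = card {(b, j). j < length Bs \<and> (\<exists>i<j. b \<in> Bs ! i) \<and> b < Max (Bs ! j)}"

definition sblocks :: "nat set list \<Rightarrow> nat" where
  "sblocks Bs = length (filter (\<lambda>B. card B = 1) Bs)"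

definition dblocks :: "nat set list \<Rightarrow> nat" where
  "dblocks Bs = length (filter (\<lambda>B. card B = 2) Bs)"

definition F :: "nat \<Rightarrow> 'a::comm_ring_1 \<Rightarrow> 'a \<Rightarrow> 'a \<Rightarrow> 'a" where
  "F n x y q = (\<Sum>Bs\<in>layered n. x ^ sblocks Bs * y ^ dblocks Bs * q ^ rb Bs)"

definition qbinom :: "nat \<Rightarrow> nat \<Rightarrow> 'a::field \<Rightarrow> 'a" where
  "qbinom n k q = (\<Prod>i=1..k. (q ^ (n + 1 - i) - 1) / (q ^ i - 1))"

end

theory Submission
  imports Defs
begin

(* A layered matching of [n] is determined by its composition
   cs of n into parts 1 and 2 (the block sizes read from left to right).
   Under this encoding s and d count the parts 1 and 2, and rb becomes the
   statistic rb_comp (c # cs) = c * length cs + rb_comp cs, because every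
   element of the first block lies below the maximum of every later block.
   Splitting off the first block therefore gives the functional recurrence
     F (n+2) x y = x F (n+1) (xq) (yq) + y F n (xq^2) (yq^2).
   Writing G N a = F N (xq^a) (yq^a), iterating this recurrence n times
   (valid as long as 2n <= N) expands G N a as a sum over k <= n whose
   coefficients obey a q-Pascal rule; they are q^(n choose 2 + k choose 2)
   times the q-binomial coefficient defined by its Pascal recursion.
   Taking N = 2n, a = 0 and identifying the recursive q-binomial with the
   product formula (possible since q^i <> 1 for 1 <= i <= n) gives the
   theorem. *)

section \<open>Compositions of n into parts 1 and 2\<close>

definition comps :: "nat \<Rightarrow> nat list set" where
  "comps n = {cs. set cs \<subseteq> {1, 2} \<and> sum_list cs = n}"

lemma comps_0: "comps 0 = {[]}"
proof -
  have "cs \<in> comps 0 \<Longrightarrow> cs = []" for cs by (cases cs) (auto simp: comps_def)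
  then show ?thesis by (auto simp: comps_def)
qed

lemma comps_1: "comps (Suc 0) = {[1]}"
proof -
  have "cs = [1]" if "cs \<in> comps (Suc 0)" for cs
    using that by (cases cs; cases "tl cs") (auto simp: comps_def)
  then show ?thesis by (auto simp: comps_def)
qed

lemma comps_SS: "comps (Suc (Suc n)) = Cons 1 ` comps (Suc n) \<union> Cons 2 ` comps n"
proof
  show "comps (Suc (Suc n)) \<subseteq> Cons 1 ` comps (Suc n) \<union> Cons 2 ` comps n"
  proof
    fix cs assume cs: "cs \<in> comps (Suc (Suc n))"
    then obtain c r where "cs = c # r" "c = 1 \<or> c = 2"
      unfolding comps_def by (cases cs) auto
    with cs show "cs \<in> Cons 1 ` comps (Suc n) \<union> Cons 2 ` comps n"
      unfolding comps_def by auto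
  qed
qed (auto simp: comps_def)

lemma finite_comps: "finite (comps n)"
proof -
  have "finite (comps n) \<and> finite (comps (Suc n))"
    by (induction n) (auto simp: comps_0 comps_1 comps_SS)
  then show ?thesis ..
qed

definition ones :: "nat list \<Rightarrow> nat" where
  "ones cs = length (filter (\<lambda>c. c = 1) cs)"

definition twos :: "nat list \<Rightarrow> nat" where
  "twos cs = length (filter (\<lambda>c. c = 2) cs)"

text \<open>rb read off the block sizes: every element of the first block (c of them)
  is counted once against each of the later blocks.\<close>
fun rb_comp :: "nat list \<Rightarrow> nat" where
  "rb_comp [] = 0"
| "rb_comp (c # cs) = c * length cs + rb_comp cs"

definition weight :: "nat list \<Rightarrow> 'a::comm_ring_1 \<Rightarrow> 'a \<Rightarrow> 'a \<Rightarrow> 'a" where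
  "weight cs x y q = x ^ ones cs * y ^ twos cs * q ^ rb_comp cs"

lemma length_ones_twos: "set cs \<subseteq> {1, 2} \<Longrightarrow> length cs = ones cs + twos cs"
  by (induction cs) (auto simp: ones_def twos_def)

text \<open>Removing a first part c shifts x and y by the factor q^c, since the
  c elements of that block contribute c to rb for each later block.\<close>
lemma weight_Cons_1:
  "set cs \<subseteq> {1, 2} \<Longrightarrow> weight (Suc 0 # cs) x y q = x * weight cs (x * q) (y * q) q"
  by (simp add: weight_def ones_def twos_def length_ones_twos[of cs]
      power_mult_distrib power_add algebra_simps)

lemma weight_Cons_2:
  "set cs \<subseteq> {1, 2} \<Longrightarrow> weight (2 # cs) x y q = y * weight cs (x * q^2) (y * q^2) q"
  by (simp add: weight_def ones_def twos_def length_ones_twos[of cs]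
      power_mult_distrib power_add power_mult algebra_simps)

fun Frec :: "nat \<Rightarrow> 'a::comm_ring_1 \<Rightarrow> 'a \<Rightarrow> 'a \<Rightarrow> 'a" where
  "Frec 0 x y q = 1"
| "Frec (Suc 0) x y q = x"
| "Frec (Suc (Suc n)) x y q = x * Frec (Suc n) (x * q) (y * q) q + y * Frec n (x * q^2) (y * q^2) q"

lemma sum_weight_comps: "(\<Sum>cs\<in>comps n. weight cs x y q) = Frec n x y q"
proof (induction n x y q rule: Frec.induct)
  case (1 x y q) then show ?case by (simp add: comps_0 weight_def ones_def twos_def)
next
  case (2 x y q) then show ?case by (simp add: comps_1 weight_def ones_def twos_def)
next
  case (3 n x y q)
  have "(\<Sum>cs\<in>comps (Suc (Suc n)). weight cs x y q) =
      (\<Sum>cs\<in>Cons 1 ` comps (Suc n). weight cs x y q) + (\<Sum>cs\<in>Cons 2 ` comps n. weight cs x y q)"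
    unfolding comps_SS by (rule sum.union_disjoint) (auto simp: finite_comps)
  also have "(\<Sum>cs\<in>Cons 1 ` comps (Suc n). weight cs x y q) =
      (\<Sum>cs\<in>comps (Suc n). x * weight cs (x * q) (y * q) q)"
    by (subst sum.reindex) (auto intro!: sum.cong simp: comps_def weight_Cons_1)
  also have "(\<Sum>cs\<in>Cons 2 ` comps n. weight cs x y q) =
      (\<Sum>cs\<in>comps n. y * weight cs (x * q^2) (y * q^2) q)"
    by (subst sum.reindex) (auto intro!: sum.cong simp: comps_def weight_Cons_2)
  finally show ?case using 3 by (simp add: sum_distrib_left[symmetric])
qed

section \<open>From layered matchings to compositions\<close>

lemma map_card_intervals: "map card (intervals a cs) = cs"
  by (induction cs arbitrary: a) auto

lemma inj_intervals: "inj (intervals a)"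
  by (metis map_card_intervals injI)

lemma sblocks_intervals: "sblocks (intervals a cs) = ones cs"
  by (induction cs arbitrary: a) (auto simp: sblocks_def ones_def)

lemma dblocks_intervals: "dblocks (intervals a cs) = twos cs"
  by (induction cs arbitrary: a) (auto simp: dblocks_def twos_def)

lemma length_intervals: "length (intervals a cs) = length cs"
  by (induction cs arbitrary: a) auto

lemma intervals_ge: "B \<in> set (intervals a cs) \<Longrightarrow> b \<in> B \<Longrightarrow> a \<le> b"
  by (induction cs arbitrary: a) fastforce+

lemma intervals_finite: "B \<in> set (intervals a cs) \<Longrightarrow> finite B"
  by (induction cs arbitrary: a) auto

lemma intervals_nonempty: "set cs \<subseteq> {1, 2} \<Longrightarrow> B \<in> set (intervals a cs) \<Longrightarrow> B \<noteq> {}"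
  by (induction cs arbitrary: a) auto

definition rb_pairs :: "nat set list \<Rightarrow> (nat \<times> nat) set" where
  "rb_pairs Bs = {(b, j). j < length Bs \<and> (\<exists>i<j. b \<in> Bs ! i) \<and> b < Max (Bs ! j)}"

lemma rb_eq_card_rb_pairs: "rb Bs = card (rb_pairs Bs)"
  by (simp add: rb_def rb_pairs_def)

lemma finite_rb_pairs:
  assumes "\<And>B. B \<in> set Bs \<Longrightarrow> finite B"
  shows "finite (rb_pairs Bs)"
proof (rule finite_subset)
  show "rb_pairs Bs \<subseteq> \<Union> (set Bs) \<times> {..<length Bs}"
    unfolding rb_pairs_def by auto (meson less_trans nth_mem)
  show "finite (\<Union> (set Bs) \<times> {..<length Bs})" using assms by auto
qed

lemma rb_pairs_Cons: "rb_pairs (B # Bs) = (\<lambda>(b, j). (b, Suc j)) ` rb_pairs Bs \<union>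
   {(b, Suc j) | b j. j < length Bs \<and> b \<in> B \<and> b < Max (Bs ! j)}"
proof (rule set_eqI)
  fix p :: "nat \<times> nat"
  obtain b j where p: "p = (b, j)" by (cases p)
  show "p \<in> rb_pairs (B # Bs) \<longleftrightarrow> p \<in> (\<lambda>(b, j). (b, Suc j)) ` rb_pairs Bs \<union>
   {(b, Suc j) | b j. j < length Bs \<and> b \<in> B \<and> b < Max (Bs ! j)}"
  proof (cases j)
    case 0 then show ?thesis by (auto simp: p rb_pairs_def)
  next
    case (Suc k)
    have ex_shift: "(\<exists>i<Suc k. P i) \<longleftrightarrow> P 0 \<or> (\<exists>i<k. P (Suc i))" for P
      by (metis less_Suc_eq_0_disj Suc_less_eq)
    have "p \<in> rb_pairs (B # Bs) \<longleftrightarrow>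
        k < length Bs \<and> (b \<in> B \<or> (\<exists>i<k. b \<in> Bs ! i)) \<and> b < Max (Bs ! k)"
      unfolding rb_pairs_def p Suc by (simp add: ex_shift)
    moreover have "p \<in> (\<lambda>(b, j). (b, Suc j)) ` rb_pairs Bs \<longleftrightarrow>
        k < length Bs \<and> (\<exists>i<k. b \<in> Bs ! i) \<and> b < Max (Bs ! k)"
      unfolding rb_pairs_def p Suc by auto
    ultimately show ?thesis by (auto simp: p Suc)
  qed
qed

lemma below_Max_intervals:
  assumes "set cs \<subseteq> {1, 2}" "j < length cs" "b < a"
  shows "b < Max (intervals a cs ! j)"
proof -
  let ?B = "intervals a cs ! j"
  have B: "?B \<in> set (intervals a cs)" using assms(2) by (simp add: length_intervals)
  then obtain z where z: "z \<in> ?B" using intervals_nonempty[OF assms(1)] by blast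
  have "a \<le> z" using intervals_ge[OF B z] .
  also have "z \<le> Max ?B" using z intervals_finite[OF B] by simp
  finally show ?thesis using assms(3) by linarith
qed

lemma rb_pairs_intervals_ge: "(b, j) \<in> rb_pairs (intervals a cs) \<Longrightarrow> a \<le> b"
  unfolding rb_pairs_def
proof clarify
  fix i assume "j < length (intervals a cs)" "i < j" "b \<in> intervals a cs ! i"
  then have "intervals a cs ! i \<in> set (intervals a cs)" by simp
  then show "a \<le> b" using intervals_ge \<open>b \<in> intervals a cs ! i\<close> by blast
qed

lemma rb_intervals: "set cs \<subseteq> {1, 2} \<Longrightarrow> rb (intervals a cs) = rb_comp cs"
proof (induction cs arbitrary: a)
  case Nil then show ?case by (simp add: rb_def)
next
  case (Cons c cs)
  let ?Bs = "intervals (a + c) cs" and ?shift = "\<lambda>(b, j). (b, Suc j)"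
  have cs: "set cs \<subseteq> {1, 2}" using Cons.prems by simp
  have new: "{(b, Suc j) | b j. j < length ?Bs \<and> b \<in> {a..<a + c} \<and> b < Max (?Bs ! j)}
      = {a..<a + c} \<times> Suc ` {..<length cs}"
    using below_Max_intervals[OF cs] by (auto simp: length_intervals)
  have split: "rb_pairs (intervals a (c # cs)) = ?shift ` rb_pairs ?Bs \<union> {a..<a + c} \<times> Suc ` {..<length cs}"
    using rb_pairs_Cons[of "{a..<a + c}" ?Bs] new by simp
  have disjoint: "?shift ` rb_pairs ?Bs \<inter> {a..<a + c} \<times> Suc ` {..<length cs} = {}"
    using rb_pairs_intervals_ge[of _ _ "a + c" cs] by fastforce
  have "finite (rb_pairs ?Bs)" using finite_rb_pairs intervals_finite by blast
  moreover have "inj_on ?shift (rb_pairs ?Bs)" by (auto simp: inj_on_def)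
  ultimately have "card (rb_pairs (intervals a (c # cs))) = card (rb_pairs ?Bs) + c * length cs"
    unfolding split using disjoint by (simp add: card_Un_disjoint card_image card_cartesian_product)
  then show ?case using Cons.IH[OF cs] by (simp add: rb_eq_card_rb_pairs)
qed

lemma F_eq_Frec: "F n x y q = Frec n x y q"
proof -
  have "F n x y q = (\<Sum>cs\<in>comps n. weight cs x y q)"
    unfolding F_def layered_def comps_def[symmetric]
    by (rule sum.reindex_cong[of "intervals 1"])
       (auto simp: inj_on_def inj_intervals[THEN injD] comps_def weight_def
         sblocks_intervals dblocks_intervals rb_intervals)
  then show ?thesis by (simp add: sum_weight_comps)
qed

section \<open>Iterating the recurrence\<close>

fun qbin :: "nat \<Rightarrow> nat \<Rightarrow> 'a::comm_ring_1 \<Rightarrow> 'a" where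
  "qbin n 0 q = 1"
| "qbin 0 (Suc k) q = 0"
| "qbin (Suc n) (Suc k) q = q ^ Suc k * qbin n (Suc k) q + qbin n k q"

lemma qbin_gt: "n < k \<Longrightarrow> qbin n k q = 0"
  by (induction n k q rule: qbin.induct) auto

text \<open>The coefficient of the k-th term after n steps of the recurrence.\<close>
definition coeff :: "nat \<Rightarrow> nat \<Rightarrow> 'a::comm_ring_1 \<Rightarrow> 'a" where
  "coeff n k q = q ^ ((n choose 2) + (k choose 2)) * qbin n k q"

lemma choose2_Suc: "Suc m choose 2 = m + (m choose 2)"
  by (simp add: numeral_2_eq_2)

lemma coeff_0_0: "coeff 0 0 q = 1"
  by (simp add: coeff_def numeral_2_eq_2)

lemma coeff_gt: "n < k \<Longrightarrow> coeff n k q = 0"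
  by (simp add: coeff_def qbin_gt)

lemma coeff_Suc_0: "coeff (Suc n) 0 q = q ^ n * coeff n 0 q"
  by (simp add: coeff_def choose2_Suc power_add)

lemma coeff_Suc_Suc:
  "coeff (Suc n) (Suc k) q = q ^ (n + Suc k) * coeff n (Suc k) q + q ^ (n + k) * coeff n k q"
  by (simp add: coeff_def choose2_Suc power_add algebra_simps)

lemma pascal_row_sum:
  fixes c c' w H :: "nat \<Rightarrow> 'a::comm_semiring_1"
  assumes first: "c' 0 = w 0 * c 0"
    and step: "\<And>k. c' (Suc k) = w (Suc k) * c (Suc k) + w k * c k"
    and last: "c (Suc n) = 0"
  shows "(\<Sum>k\<le>Suc n. c' k * H k) = (\<Sum>k\<le>n. w k * c k * (H k + H (Suc k)))"
proof -
  have "(\<Sum>k\<le>Suc n. c' k * H k) = c' 0 * H 0 + (\<Sum>k\<le>n. c' (Suc k) * H (Suc k))"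
    by (rule sum.atMost_Suc_shift)
  also have "\<dots> = (w 0 * c 0 * H 0 + (\<Sum>k\<le>n. w (Suc k) * c (Suc k) * H (Suc k)))
      + (\<Sum>k\<le>n. w k * c k * H (Suc k))"
    by (simp add: first step sum.distrib algebra_simps)
  also have "w 0 * c 0 * H 0 + (\<Sum>k\<le>n. w (Suc k) * c (Suc k) * H (Suc k))
      = (\<Sum>k\<le>n. w k * c k * H k)"
    using sum.atMost_Suc_shift[of "\<lambda>k. w k * c k * H k" n] by (simp add: last)
  finally show ?thesis by (simp add: sum.distrib algebra_simps)
qed

definition Fshift :: "'a::comm_ring_1 \<Rightarrow> 'a \<Rightarrow> 'a \<Rightarrow> nat \<Rightarrow> nat \<Rightarrow> 'a" where
  "Fshift x y q N a = Frec N (x * q ^ a) (y * q ^ a) q"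

lemma Fshift_Suc_Suc: "Fshift x y q (Suc (Suc N)) a =
    x * q ^ a * Fshift x y q (Suc N) (Suc a) + y * q ^ a * Fshift x y q N (a + 2)"
  by (simp add: Fshift_def power_add power2_eq_square algebra_simps)

lemma Fshift_expand:
  fixes x y q :: "'a::comm_ring_1"
  shows "2 * n \<le> N \<Longrightarrow> Fshift x y q N a =
    (\<Sum>k\<le>n. coeff n k q * (x ^ (n - k) * y ^ k * q ^ (n * a) * Fshift x y q (N - n - k) (a + n + k)))"
proof (induction n)
  case 0 then show ?case by (simp add: coeff_0_0)
next
  case (Suc n)
  define H where "H k = x ^ (Suc n - k) * y ^ k * q ^ (Suc n * a)
      * Fshift x y q (N - Suc n - k) (a + Suc n + k)" for k
  have expand_term: "x ^ (n - k) * y ^ k * q ^ (n * a) * Fshift x y q (N - n - k) (a + n + k)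
      = q ^ (n + k) * (H k + H (Suc k))" if "k \<le> n" for k
  proof -
    define M where "M = N - Suc n - Suc k"
    have "N - n - k = Suc (Suc M)" "N - Suc n - k = Suc M" "Suc n - k = Suc (n - k)"
      using that Suc.prems by (simp_all add: M_def)
    then show ?thesis
      by (simp add: H_def M_def Fshift_Suc_Suc power_add algebra_simps)
  qed
  have "Fshift x y q N a =
      (\<Sum>k\<le>n. coeff n k q * (x ^ (n - k) * y ^ k * q ^ (n * a) * Fshift x y q (N - n - k) (a + n + k)))"
    using Suc by simp
  also have "\<dots> = (\<Sum>k\<le>n. q ^ (n + k) * coeff n k q * (H k + H (Suc k)))"
    by (intro sum.cong refl) (metis atMost_iff expand_term mult.assoc mult.left_commute)
  also have "\<dots> = (\<Sum>k\<le>Suc n. coeff (Suc n) k q * H k)"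
    by (rule pascal_row_sum[symmetric]) (simp_all add: coeff_Suc_0 coeff_Suc_Suc coeff_gt)
  finally show ?case by (simp add: H_def)
qed

section \<open>The recursive and the product q-binomial coefficients\<close>

definition qnum :: "nat \<Rightarrow> nat \<Rightarrow> 'a::comm_ring_1 \<Rightarrow> 'a" where
  "qnum n k q = (\<Prod>i=1..k. q ^ (n + 1 - i) - 1)"

definition qden :: "nat \<Rightarrow> 'a::comm_ring_1 \<Rightarrow> 'a" where
  "qden k q = (\<Prod>i=1..k. q ^ i - 1)"

lemma qnum_0: "qnum n 0 q = 1"
  by (simp add: qnum_def)

lemma qnum_Suc: "qnum n (Suc k) q = qnum n k q * (q ^ (n - k) - 1)"
  by (simp add: qnum_def)

lemma qnum_Suc_Suc: "qnum (Suc n) (Suc k) q = (q ^ Suc n - 1) * qnum n k q"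
  by (induction k) (simp_all add: qnum_Suc qnum_0)

lemma qnum_gt: "n < k \<Longrightarrow> qnum n k q = 0"
  by (induction k) (auto simp: qnum_Suc less_Suc_eq)

lemma qden_Suc: "qden (Suc k) q = qden k q * (q ^ Suc k - 1)"
  by (simp add: qden_def)

text \<open>The Pascal recursion is compatible with the product formula, in a form
  free of division.\<close>
lemma qbin_mult_qden: "qbin n k q * qden k q = qnum n k q"
proof (induction n arbitrary: k)
  case 0 then show ?case by (cases k) (auto simp: qnum_0 qden_def qnum_gt)
next
  case (Suc n)
  show ?case
  proof (cases k)
    case 0 then show ?thesis by (simp add: qnum_0 qden_def)
  next
    case (Suc j)
    have "qbin (Suc n) (Suc j) q * qden (Suc j) q =
        q ^ Suc j * (qbin n (Suc j) q * qden (Suc j) q) + (qbin n j q * qden j q) * (q ^ Suc j - 1)"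
      by (simp add: qden_Suc algebra_simps)
    also have "\<dots> = q ^ Suc j * qnum n (Suc j) q + qnum n j q * (q ^ Suc j - 1)"
      using Suc.IH by simp
    also have "\<dots> = (q ^ Suc n - 1) * qnum n j q"
    proof (cases "j \<le> n")
      case True
      then have "q ^ j * q ^ (n - j) = q ^ n" by (simp flip: power_add)
      then show ?thesis by (simp add: qnum_Suc algebra_simps)
    next
      case False then show ?thesis by (simp add: qnum_gt)
    qed
    finally show ?thesis by (simp add: Suc qnum_Suc_Suc)
  qed
qed

lemma qbinom_eq_qbin:
  fixes q :: "'a::field"
  assumes "\<forall>i. 1 \<le> i \<and> i \<le> n \<longrightarrow> q ^ i \<noteq> 1" "k \<le> n"
  shows "qbinom n k q = qbin n k q"
proof -
  have "qden k q \<noteq> 0" using assms unfolding qden_def by auto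
  moreover have "qbinom n k q = qnum n k q / qden k q"
    unfolding qbinom_def qnum_def qden_def by (rule prod_dividef)
  ultimately show ?thesis by (simp add: qbin_mult_qden[symmetric])
qed

lemma choose2_add: "(n + k choose 2) = (n choose 2) + (k choose 2) + n * k"
  by (induction k) (simp_all add: choose2_Suc)

theorem theorem4p7:
  fixes x y q :: "'a::field" and n :: nat
  assumes "\<forall>i. 1 \<le> i \<and> i \<le> n \<longrightarrow> q ^ i \<noteq> 1"
  shows "F (2 * n) x y q =
    (\<Sum>k=0..n. x ^ (n - k) * y ^ k * q ^ ((n + k choose 2) - n * k) * qbinom n k q
       * F (n - k) (x * q ^ (n + k)) (y * q ^ (n + k)) q)"
proof -
  have coeff_eq: "coeff n k q = q ^ ((n + k choose 2) - n * k) * qbinom n k q" if "k \<le> n" for k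
    using qbinom_eq_qbin[OF assms that] by (simp add: coeff_def choose2_add)
  have "F (2 * n) x y q = Fshift x y q (2 * n) 0"
    by (simp add: Fshift_def F_eq_Frec)
  also have "\<dots> = (\<Sum>k\<le>n. coeff n k q * (x ^ (n - k) * y ^ k * Fshift x y q (n - k) (n + k)))"
    using Fshift_expand[of n "2 * n" x y q 0] by simp
  also have "\<dots> = (\<Sum>k=0..n. x ^ (n - k) * y ^ k * q ^ ((n + k choose 2) - n * k) * qbinom n k q
       * F (n - k) (x * q ^ (n + k)) (y * q ^ (n + k)) q)"
    by (auto simp: atLeast0AtMost coeff_eq Fshift_def F_eq_Frec intro!: sum.cong)
  finally show ?thesis .
qed

end
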